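(* Let $G$ be the free group on the generators $\vec{s}=(s_n)_{n\in\omega}$ and $S\subseteq G$ the free semigroup on the same generators. Let $p$ be a very strongly productive ultrafilter on $S$ (regarded as an ultrafilter on $G$). If $q,r\in\beta G$ satisfy $qr=p$, then there is $w\in G$ such that one of the following holds: (1) $r=wp$ and $q=pw^{-1}$; (2) $r=w$ and $q=pw^{-1}$; (3) $r=wp$ and $q=w^{-1}$. In particular, if $q,r\in G^*$ and $qr=p$, then $r=wp$ and $q=pw^{-1}$ for some $w\in G$.
   Context: $\beta G$ is the set of ultrafilters on $G$, with elements of $G$ identified with principal ultrafilters and $G^*=\beta G\setminus G$ the nonprincipal ones. The product in $\beta G$ is defined by $A\in qr$ iff $\{x\in G: x^{-1}A\in r\}\in q$, where $x^{-1}A=\{y: xy\in A\}$; thus e.g. $wp=\{A: w^{-1}A\in p\}$ and $pw^{-1}=\{A: Aw\in p\}$. For a sequence $\vec{x}$ in $S$, $\mathrm{FP}(\vec{x})$ is the set of products $\prod_{i\in a}x_i$ (increasing order of indices), $a$ a finite nonempty subset of $\omega$. A sequence $\vec{y}$ is a product subsystem of $\vec{x}$ if there are finite nonempty $a_n\subseteq\omega$ with $\max a_n<\min a_{n+1}$ and $y_n=\prod_{i\in a_n}x_i$. An ultrafilter $p$ on $S$ is very strongly productive if every $A\in p$ contains some $\mathrm{FP}(\vec{x})\in p$ with $\vec{x}$ a product subsystem of $\vec{s}$. *)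

theory Defs
  imports Main
begin

text \<open>A letter (n, True) stands for the generator s_n, (n, False) for its inverse.\<close>
type_synonym letter = "nat \<times> bool"

fun freduced :: "letter list \<Rightarrow> bool" where
  "freduced [] = True"
| "freduced [x] = True"
| "freduced (x # y # zs) = (\<not> (fst x = fst y \<and> snd x \<noteq> snd y) \<and> freduced (y # zs))"

definition cancel_step :: "letter \<Rightarrow> letter list \<Rightarrow> letter list" where
  "cancel_step x ys = (case ys of [] \<Rightarrow> [x]
     | y # ys' \<Rightarrow> (if fst y = fst x \<and> snd y \<noteq> snd x then ys' else x # ys))"

definition freduce :: "letter list \<Rightarrow> letter list" where
  "freduce xs = foldr cancel_step xs []"

typedef fg = "{xs :: letter list. freduced xs}"
  by (rule exI[of _ "[]"]) simp

definition gone :: fg where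
  "gone = Abs_fg []"

definition gmul :: "fg \<Rightarrow> fg \<Rightarrow> fg" where
  "gmul x y = Abs_fg (freduce (Rep_fg x @ Rep_fg y))"

definition ginv :: "fg \<Rightarrow> fg" where
  "ginv x = Abs_fg (rev (map (\<lambda>(n, b). (n, \<not> b)) (Rep_fg x)))"

definition gen :: "nat \<Rightarrow> fg" where
  "gen n = Abs_fg [(n, True)]"

definition freeS :: "fg set" where
  "freeS = {x. Rep_fg x \<noteq> [] \<and> (\<forall>l \<in> set (Rep_fg x). snd l)}"

definition gprod :: "fg list \<Rightarrow> fg" where
  "gprod xs = foldr gmul xs gone"

definition is_ultrafilter :: "'a set set \<Rightarrow> bool" where
  "is_ultrafilter U \<longleftrightarrow> UNIV \<in> U \<and> {} \<notin> U
     \<and> (\<forall>A B. A \<in> U \<and> B \<in> U \<longrightarrow> A \<inter> B \<in> U)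
     \<and> (\<forall>A B. A \<in> U \<and> A \<subseteq> B \<longrightarrow> B \<in> U)
     \<and> (\<forall>A. A \<in> U \<or> - A \<in> U)"

definition principal :: "'a \<Rightarrow> 'a set set" where
  "principal x = {A. x \<in> A}"

definition umult :: "fg set set \<Rightarrow> fg set set \<Rightarrow> fg set set" where
  "umult q r = {A. {x. {y. gmul x y \<in> A} \<in> r} \<in> q}"

definition FP :: "(nat \<Rightarrow> fg) \<Rightarrow> fg set" where
  "FP x = {gprod (map x (sorted_list_of_set a)) | a. finite a \<and> a \<noteq> {}}"

definition product_subsystem :: "(nat \<Rightarrow> fg) \<Rightarrow> (nat \<Rightarrow> fg) \<Rightarrow> bool" where
  "product_subsystem y x \<longleftrightarrow> (\<exists>a :: nat \<Rightarrow> nat set.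
      (\<forall>n. finite (a n) \<and> a n \<noteq> {})
    \<and> (\<forall>n. Max (a n) < Min (a (Suc n)))
    \<and> (\<forall>n. y n = gprod (map x (sorted_list_of_set (a n)))))"

definition very_strongly_productive :: "fg set set \<Rightarrow> bool" where
  "very_strongly_productive p \<longleftrightarrow>
     (\<forall>A \<in> p. \<exists>y. product_subsystem y gen \<and> FP y \<subseteq> A \<and> FP y \<in> p)"

end

theory Submission
  imports Defs
begin

text \<open>
  Write pword A for the increasing word, the product of the generators s_i, i \<in> A, in
  increasing order of i. By very strong productivity every member of p contains a member of
  p of the form {pword V | V a finite union of blocks of a block sequence}; in particular the
  increasing words form a member of p.

  If q r = p with q nonprincipal and both q and r concentrated on increasing words, then,
  for a block sequence whose block unions form a member of p, the product a u is a block
  union for q-many a and r-many u. Cutting a u at the block containing the last index of a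
  shows that a and u are block unions themselves, except for a set of a's that is finite,
  hence negligible for q. Thus q = r = p.

  In general, for q-many x the translate x u of an r-typical increasing word u is again
  increasing. Then x = pword A \<cdot> (pword B)\<inverse> in reduced form, where B is cancelled
  against an initial segment of u, and the sets B are initial segments of their union F.
  If there were infinitely many of them, F would be infinite, and p would contain either
  words whose index sets are convex subsets of F, which block sequences rule out, or words
  whose index sets are not, while the translates produce blocks that are. So one B occurs
  q-often, and translating q and r by w = pword B reduces to the first case, giving
  r = w p and q = p w\<inverse>.
\<close>

section \<open>The free group\<close>

definition cancels :: "letter \<Rightarrow> letter \<Rightarrow> bool" where
  "cancels x y \<longleftrightarrow> fst x = fst y \<and> snd x \<noteq> snd y"

definition inv_word :: "letter list \<Rightarrow> letter list" where
  "inv_word xs = rev (map (\<lambda>(n, b). (n, \<not> b)) xs)"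

lemma freduced_Cons: "freduced (x # ys) \<longleftrightarrow> freduced ys \<and> (ys = [] \<or> \<not> cancels x (hd ys))"
  by (cases ys) (auto simp: cancels_def)

lemma freduced_append:
  "freduced (xs @ ys) \<longleftrightarrow>
     freduced xs \<and> freduced ys \<and> (xs = [] \<or> ys = [] \<or> \<not> cancels (last xs) (hd ys))"
  by (induction xs) (auto simp: freduced_Cons)

lemma freduced_cancel_step: "freduced ys \<Longrightarrow> freduced (cancel_step x ys)"
  by (cases ys) (auto simp: cancel_step_def freduced_Cons cancels_def)

lemma freduced_foldr_cancel_step: "freduced zs \<Longrightarrow> freduced (foldr cancel_step xs zs)"
  by (induction xs) (auto intro: freduced_cancel_step)

lemma freduced_freduce: "freduced (freduce xs)"
  unfolding freduce_def by (simp add: freduced_foldr_cancel_step)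

lemma freduce_freduced: "freduced xs \<Longrightarrow> freduce xs = xs"
  unfolding freduce_def
  by (induction xs) (auto simp: freduced_Cons cancel_step_def cancels_def split: list.split)

lemma cancel_step_cancel_step:
  assumes "freduced zs" "cancels x y"
  shows "cancel_step x (cancel_step y zs) = zs"
  using assms
  by (cases zs rule: freduced.cases)
     (auto simp: cancel_step_def cancels_def freduced_Cons prod_eq_iff)

lemma foldr_cancel_step_cancel_step:
  assumes "freduced ys" "freduced zs"
  shows "foldr cancel_step (cancel_step x ys) zs = cancel_step x (foldr cancel_step ys zs)"
  using assms cancel_step_cancel_step[OF freduced_foldr_cancel_step]
  by (cases ys) (auto simp: cancel_step_def cancels_def)

lemma foldr_cancel_step_freduce:
  "freduced zs \<Longrightarrow> foldr cancel_step (freduce xs) zs = foldr cancel_step xs zs"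
proof (induction xs)
  case (Cons x xs)
  have "freduce (x # xs) = cancel_step x (freduce xs)"
    by (simp add: freduce_def)
  then show ?case
    using Cons foldr_cancel_step_cancel_step[OF freduced_freduce Cons.prems] by simp
qed (simp add: freduce_def)

lemma freduce_append: "freduce (xs @ ys) = foldr cancel_step xs (freduce ys)"
  by (simp add: freduce_def)

lemma freduce_freduce_append: "freduce (freduce xs @ ys) = freduce (xs @ ys)"
  by (simp add: freduce_append foldr_cancel_step_freduce freduced_freduce)

lemma freduce_append_freduce: "freduce (xs @ freduce ys) = freduce (xs @ ys)"
  by (simp add: freduce_append freduce_freduced freduced_freduce)

lemma inv_word_Cons: "inv_word (x # xs) = inv_word xs @ [(fst x, \<not> snd x)]"
  by (cases x) (simp add: inv_word_def)

lemma freduced_inv_word: "freduced xs \<Longrightarrow> freduced (inv_word xs)"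
proof (induction xs)
  case (Cons x xs)
  show ?case
  proof (cases xs)
    case (Cons y ys)
    have "inv_word xs \<noteq> []" "last (inv_word xs) = (fst y, \<not> snd y)"
      using Cons by (simp_all add: inv_word_def split: prod.split)
    then show ?thesis
      using Cons Cons.IH Cons.prems
      by (auto simp: inv_word_Cons freduced_append freduced_Cons cancels_def)
  qed (simp add: inv_word_def)
qed (simp add: inv_word_def)

lemma freduce_inv_word: "freduce (xs @ inv_word xs) = []"
proof (induction xs)
  case (Cons x xs)
  have "freduce ((x # xs) @ inv_word (x # xs))
      = cancel_step x (freduce (freduce (xs @ inv_word xs) @ [(fst x, \<not> snd x)]))"
    by (simp add: inv_word_Cons freduce_freduce_append) (simp add: freduce_def)
  then show ?case
    using Cons by (simp add: freduce_def cancel_step_def)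
qed (simp add: inv_word_def freduce_def)

lemma inv_word_inv_word [simp]: "inv_word (inv_word xs) = xs"
  by (simp add: inv_word_def rev_map comp_def case_prod_beta)

lemma Rep_fg_Abs_fg: "freduced xs \<Longrightarrow> Rep_fg (Abs_fg xs) = xs"
  by (simp add: Abs_fg_inverse)

lemma freduced_Rep_fg: "freduced (Rep_fg x)"
  using Rep_fg by simp

lemma Rep_gmul: "Rep_fg (gmul x y) = freduce (Rep_fg x @ Rep_fg y)"
  by (simp add: gmul_def Rep_fg_Abs_fg freduced_freduce)

lemma Rep_gone: "Rep_fg gone = []"
  by (simp add: gone_def Rep_fg_Abs_fg)

lemma Rep_ginv: "Rep_fg (ginv x) = inv_word (Rep_fg x)"
  by (simp add: ginv_def Rep_fg_Abs_fg freduced_inv_word freduced_Rep_fg flip: inv_word_def)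

interpretation fg: group gmul gone ginv
proof
  show "gmul (gmul x y) z = gmul x (gmul y z)" for x y z
    by (simp add: Rep_fg_inject[symmetric] Rep_gmul freduce_freduce_append freduce_append_freduce)
  show "gmul gone x = x" for x
    by (simp add: Rep_fg_inject[symmetric] Rep_gmul Rep_gone freduce_freduced freduced_Rep_fg)
  show "gmul (ginv x) x = gone" for x
    using freduce_inv_word[of "inv_word (Rep_fg x)"]
    by (simp add: Rep_fg_inject[symmetric] Rep_gmul Rep_ginv Rep_gone)
qed

section \<open>Increasing positive words\<close>

definition less_sets :: "nat set \<Rightarrow> nat set \<Rightarrow> bool" where
  "less_sets A B \<longleftrightarrow> (\<forall>a\<in>A. \<forall>b\<in>B. a < b)"

definition pword :: "nat set \<Rightarrow> fg" where
  "pword A = Abs_fg (map (\<lambda>i. (i, True)) (sorted_list_of_set A))"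

definition pwords :: "fg set" where
  "pwords = pword ` {A. finite A \<and> A \<noteq> {}}"

definition indices :: "fg \<Rightarrow> nat set" where
  "indices x = fst ` set (Rep_fg x)"

lemma freduced_positive: "\<forall>l\<in>set xs. snd l \<Longrightarrow> freduced xs"
  by (induction xs rule: freduced.induct) auto

lemma Rep_pword: "Rep_fg (pword A) = map (\<lambda>i. (i, True)) (sorted_list_of_set A)"
  unfolding pword_def by (rule Rep_fg_Abs_fg, rule freduced_positive) auto

lemma indices_pword [simp]: "finite A \<Longrightarrow> indices (pword A) = A"
  by (simp add: indices_def Rep_pword image_image)

lemma pword_inject: "finite A \<Longrightarrow> finite B \<Longrightarrow> pword A = pword B \<longleftrightarrow> A = B"
  using indices_pword by fastforce

lemma pword_empty [simp]: "pword {} = gone"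
  by (simp add: pword_def gone_def)

lemma pwordsE:
  assumes "u \<in> pwords"
  obtains "finite (indices u)" "indices u \<noteq> {}" "u = pword (indices u)"
proof -
  obtain A where "finite A" "A \<noteq> {}" "u = pword A"
    using assms by (auto simp: pwords_def)
  then show thesis
    using that by simp
qed

lemma pwordsI: "finite A \<Longrightarrow> A \<noteq> {} \<Longrightarrow> pword A \<in> pwords"
  by (simp add: pwords_def)

lemma pword_in_pwords_or_gone: "finite A \<Longrightarrow> pword A \<in> pwords \<union> {gone}"
  by (cases "A = {}") (auto intro: pwordsI)

lemma sorted_list_of_set_Un_less_sets:
  assumes "finite A" "finite B" "less_sets A B"
  shows "sorted_list_of_set (A \<union> B) = sorted_list_of_set A @ sorted_list_of_set B"
proof (rule strict_sorted_equal)
  show "sorted_wrt (<) (sorted_list_of_set A @ sorted_list_of_set B)"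
    using assms by (auto simp: sorted_wrt_append less_sets_def)
qed (use assms in simp_all)

lemma gmul_pword:
  assumes "finite A" "finite B" "less_sets A B"
  shows "gmul (pword A) (pword B) = pword (A \<union> B)"
proof -
  have "Rep_fg (pword A) @ Rep_fg (pword B) = Rep_fg (pword (A \<union> B))"
    using sorted_list_of_set_Un_less_sets[OF assms] by (simp add: Rep_pword)
  then show ?thesis
    by (simp add: Rep_fg_inject[symmetric] Rep_gmul freduce_freduced freduced_Rep_fg)
qed

lemma last_sorted_list_of_set:
  assumes "finite A" "A \<noteq> {}"
  shows "last (sorted_list_of_set A) = Max A"
proof (rule sym, rule Max_eqI)
  have ne: "sorted_list_of_set A \<noteq> []"
    using assms by simp
  show "last (sorted_list_of_set A) \<in> A"
    using last_in_set[OF ne] assms(1) by simp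
  have "sorted l \<Longrightarrow> x \<in> set l \<Longrightarrow> x \<le> last l" for l :: "'a::linorder list" and x
    by (induction l) auto
  from this[of "sorted_list_of_set A"]
  show "y \<le> last (sorted_list_of_set A)" if "y \<in> A" for y
    using that assms(1) by simp
qed (fact assms)

text \<open>pword A \<cdot> (pword B)\<inverse> is reduced as written exactly when the letters s_(Max A) and
  s_(Max B)\<inverse> at the junction do not cancel.\<close>

definition normal_pair :: "nat set \<Rightarrow> nat set \<Rightarrow> bool" where
  "normal_pair A B \<longleftrightarrow> finite A \<and> finite B \<and> (A = {} \<or> B = {} \<or> Max A \<noteq> Max B)"

lemma Rep_gmul_pword_ginv_pword:
  assumes "normal_pair A B"
  shows "Rep_fg (gmul (pword A) (ginv (pword B))) = Rep_fg (pword A) @ inv_word (Rep_fg (pword B))"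
proof -
  have "last (Rep_fg (pword A)) = (Max A, True)" if "A \<noteq> {}"
    using that assms by (simp add: normal_pair_def Rep_pword last_map last_sorted_list_of_set)
  moreover have "hd (inv_word (Rep_fg (pword B))) = (Max B, False)" if "B \<noteq> {}"
    using that assms
    by (simp add: normal_pair_def Rep_pword inv_word_def hd_rev last_map last_sorted_list_of_set)
  ultimately have
    "A = {} \<or> B = {} \<or> \<not> cancels (last (Rep_fg (pword A))) (hd (inv_word (Rep_fg (pword B))))"
    using assms by (cases "A = {}"; cases "B = {}") (auto simp: normal_pair_def cancels_def)
  moreover have "Rep_fg (pword A) = [] \<longleftrightarrow> A = {}" "inv_word (Rep_fg (pword B)) = [] \<longleftrightarrow> B = {}"
    using assms by (auto simp: normal_pair_def Rep_pword inv_word_def)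
  ultimately have "freduced (Rep_fg (pword A) @ inv_word (Rep_fg (pword B)))"
    by (auto simp: freduced_append freduced_Rep_fg freduced_inv_word)
  then show ?thesis
    by (simp add: Rep_gmul Rep_ginv freduce_freduced)
qed

lemma normal_pair_unique:
  assumes "normal_pair A B" "normal_pair A' B'"
    and "gmul (pword A) (ginv (pword B)) = gmul (pword A') (ginv (pword B'))"
  shows "A = A' \<and> B = B'"
proof -
  have eq: "Rep_fg (pword A) @ inv_word (Rep_fg (pword B))
      = Rep_fg (pword A') @ inv_word (Rep_fg (pword B'))"
    using assms Rep_gmul_pword_ginv_pword by metis
  have pos: "filter snd (Rep_fg (pword C) @ inv_word (Rep_fg (pword D))) = Rep_fg (pword C)"
    and neg: "filter (Not \<circ> snd) (Rep_fg (pword C) @ inv_word (Rep_fg (pword D)))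
      = inv_word (Rep_fg (pword D))" for C D
    by (simp_all add: Rep_pword inv_word_def comp_def filter_empty_conv)
  have "Rep_fg (pword A) = Rep_fg (pword A')"
    using pos[of A B] pos[of A' B'] eq by simp
  moreover have "inv_word (Rep_fg (pword B)) = inv_word (Rep_fg (pword B'))"
    using neg[of A B] neg[of A' B'] eq by simp
  then have "Rep_fg (pword B) = Rep_fg (pword B')"
    by (metis inv_word_inv_word)
  ultimately have "pword A = pword A'" "pword B = pword B'"
    by (simp_all add: Rep_fg_inject)
  then show ?thesis
    using assms pword_inject by (auto simp: normal_pair_def)
qed

definition normal_parts :: "fg \<Rightarrow> nat set \<times> nat set" where
  "normal_parts x = (SOME (A, B). normal_pair A B \<and> x = gmul (pword A) (ginv (pword B)))"

abbreviation pos_part :: "fg \<Rightarrow> nat set" where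
  "pos_part x \<equiv> fst (normal_parts x)"

abbreviation neg_part :: "fg \<Rightarrow> nat set" where
  "neg_part x \<equiv> snd (normal_parts x)"

lemma normal_parts_eqI:
  assumes "normal_pair A B" "x = gmul (pword A) (ginv (pword B))"
  shows "normal_parts x = (A, B)"
proof -
  have "case normal_parts x of (A, B) \<Rightarrow> normal_pair A B \<and> x = gmul (pword A) (ginv (pword B))"
    unfolding normal_parts_def by (rule someI[of _ "(A, B)"]) (use assms in simp)
  then show ?thesis
    using normal_pair_unique assms by (auto split: prod.splits)
qed

lemma normal_parts_pword: "finite A \<Longrightarrow> normal_parts (pword A) = (A, {})"
  by (rule normal_parts_eqI) (auto simp: normal_pair_def)

lemma common_final_segment:
  assumes "finite U" "finite V"
  obtains A B T where "normal_pair A B" "U = B \<union> T" "V = A \<union> T"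
    "less_sets B T" "less_sets A T" "finite T"
proof -
  \<comment> \<open>the longest common final segment of U and V\<close>
  define T where "T = {t \<in> V \<inter> U. \<forall>s\<ge>t. s \<in> V \<longleftrightarrow> s \<in> U}"
  have TU: "T \<subseteq> U" and TV: "T \<subseteq> V"
    unfolding T_def by auto
  have up: "s \<in> T" if "t \<in> T" "t \<le> s" "s \<in> V \<union> U" for s t
    using that unfolding T_def by auto
  have less: "less_sets (V - T) T" "less_sets (U - T) T"
    unfolding less_sets_def using up by (meson DiffE UnI1 UnI2 not_less)+
  have "Max (V - T) \<noteq> Max (U - T)" if ne: "V - T \<noteq> {}" "U - T \<noteq> {}"
  proof
    assume eq: "Max (V - T) = Max (U - T)"
    define m where "m = Max (V - T)"
    have "m \<in> V - T" "m \<in> U - T"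
      using ne eq assms Max_in[of "V - T"] Max_in[of "U - T"] by (simp_all add: m_def)
    moreover have "s \<in> V \<longleftrightarrow> s \<in> U" if "m < s" for s
    proof -
      have "s \<notin> V - T" "s \<notin> U - T"
        using that ne assms Max_less_iff[of "V - T" s] Max_less_iff[of "U - T" s]
        by (auto simp: m_def eq)
      then show ?thesis
        using TU TV by blast
    qed
    ultimately have "m \<in> T"
      unfolding T_def by (auto simp: le_less)
    then show False
      using \<open>m \<in> V - T\<close> by simp
  qed
  then have "normal_pair (V - T) (U - T)"
    using assms by (auto simp: normal_pair_def)
  moreover have "U = (U - T) \<union> T" "V = (V - T) \<union> T"
    using TU TV by auto
  moreover have "finite T"
    using assms TU finite_subset by blast
  ultimately show thesis
    by (rule that[OF _ _ _ less(2,1)])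
qed

lemma gmul_pword_eq_pword:
  assumes "finite U" "finite V" "gmul x (pword U) = pword V"
  shows "normal_pair (pos_part x) (neg_part x)"
    and "x = gmul (pword (pos_part x)) (ginv (pword (neg_part x)))"
    and "\<exists>T. U = neg_part x \<union> T \<and> V = pos_part x \<union> T \<and> less_sets (neg_part x) T
      \<and> less_sets (pos_part x) T \<and> finite T"
proof -
  obtain A B T where ABT: "normal_pair A B" "U = B \<union> T" "V = A \<union> T"
    "less_sets B T" "less_sets A T" "finite T"
    using common_final_segment assms(1,2) .
  have fin: "finite A" "finite B"
    using ABT(1) by (auto simp: normal_pair_def)
  have "gmul (gmul x (pword B)) (pword T) = gmul (pword A) (pword T)"
    using assms(3) ABT fin by (simp add: gmul_pword fg.assoc)
  then have "gmul x (pword B) = pword A"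
    by (simp add: fg.right_cancel)
  then have "x = gmul (pword A) (ginv (pword B))"
    by (metis fg.assoc fg.right_inverse fg.right_neutral)
  then have "normal_parts x = (A, B)"
    using normal_parts_eqI ABT(1) by blast
  then show "normal_pair (pos_part x) (neg_part x)"
    and "x = gmul (pword (pos_part x)) (ginv (pword (neg_part x)))"
    and "\<exists>T. U = neg_part x \<union> T \<and> V = pos_part x \<union> T \<and> less_sets (neg_part x) T
      \<and> less_sets (pos_part x) T \<and> finite T"
    using ABT \<open>x = _\<close> by auto
qed

section \<open>Ultrafilters\<close>

lemma uf_UNIV: "is_ultrafilter U \<Longrightarrow> UNIV \<in> U"
  by (simp add: is_ultrafilter_def)

lemma uf_Int: "is_ultrafilter U \<Longrightarrow> A \<in> U \<Longrightarrow> B \<in> U \<Longrightarrow> A \<inter> B \<in> U"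
  by (simp add: is_ultrafilter_def)

lemma uf_mono: "is_ultrafilter U \<Longrightarrow> A \<in> U \<Longrightarrow> A \<subseteq> B \<Longrightarrow> B \<in> U"
  unfolding is_ultrafilter_def by blast

lemma uf_Compl: "is_ultrafilter U \<Longrightarrow> A \<notin> U \<Longrightarrow> - A \<in> U"
  unfolding is_ultrafilter_def by blast

lemma uf_nonempty: "is_ultrafilter U \<Longrightarrow> A \<in> U \<Longrightarrow> \<exists>x. x \<in> A"
  unfolding is_ultrafilter_def by (metis ex_in_conv)

lemma uf_Un:
  assumes "is_ultrafilter U" "A \<union> B \<in> U"
  shows "A \<in> U \<or> B \<in> U"
proof (rule ccontr)
  assume "\<not> (A \<in> U \<or> B \<in> U)"
  then have "(A \<union> B) \<inter> (- A \<inter> - B) \<in> U"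
    using assms uf_Compl uf_Int by metis
  then show False
    using assms(1) uf_nonempty by fastforce
qed

lemma uf_finite_UN:
  assumes "is_ultrafilter U" "finite I" "(\<Union>i\<in>I. F i) \<in> U"
  shows "\<exists>i\<in>I. F i \<in> U"
  using assms(2,3)
proof (induction I)
  case empty
  then show ?case
    using assms(1) uf_nonempty by fastforce
next
  case (insert i I)
  then show ?case
    using assms(1) uf_Un[of U "F i" "\<Union>j\<in>I. F j"] by auto
qed

lemma uf_subset_imp_eq:
  assumes "is_ultrafilter U" "is_ultrafilter V" "U \<subseteq> V"
  shows "U = V"
proof (rule ccontr)
  assume "U \<noteq> V"
  then obtain A where "A \<in> V" "A \<notin> U"
    using assms(3) by blast
  then have "A \<inter> - A \<in> V"
    using assms uf_Compl uf_Int by blast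
  then show False
    using assms(2) uf_nonempty by fastforce
qed

lemma uf_vimage: "is_ultrafilter U \<Longrightarrow> is_ultrafilter {A. f -` A \<in> U}"
  unfolding is_ultrafilter_def by (auto simp: vimage_Compl) (blast intro: vimage_mono)+

definition nonprincipal :: "'a set set \<Rightarrow> bool" where
  "nonprincipal U \<longleftrightarrow> (\<forall>z. {z} \<notin> U)"

lemma nonprincipal_iff:
  assumes "is_ultrafilter U"
  shows "nonprincipal U \<longleftrightarrow> U \<notin> range principal"
proof
  assume np: "U \<notin> range principal"
  show "nonprincipal U"
    unfolding nonprincipal_def
  proof (intro allI notI)
    fix z
    assume z: "{z} \<in> U"
    have "U = principal z"
    proof (intro set_eqI iffI)
      fix A
      assume "A \<in> U"
      then have "A \<inter> {z} \<in> U"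
        using z assms uf_Int by blast
      then show "A \<in> principal z"
        using assms uf_nonempty by (fastforce simp: principal_def)
    qed (use z assms uf_mono in \<open>auto simp: principal_def\<close>)
    then show False
      using np by blast
  qed
qed (auto simp: nonprincipal_def principal_def)

lemma nonprincipal_finite_notin:
  assumes "is_ultrafilter U" "nonprincipal U" "finite A"
  shows "A \<notin> U"
proof
  assume "A \<in> U"
  then have "(\<Union>z\<in>A. {z}) \<in> U"
    by simp
  then show False
    using uf_finite_UN[OF assms(1,3), of "\<lambda>z. {z}"] assms(2) by (auto simp: nonprincipal_def)
qed

lemma nonprincipal_Diff_finite:
  assumes "is_ultrafilter U" "nonprincipal U" "finite F" "A \<in> U"
  shows "A - F \<in> U"
proof -
  have "- F \<in> U"
    using assms nonprincipal_finite_notin uf_Compl by blast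
  then show ?thesis
    using assms uf_Int[of U A "- F"] by (simp add: Diff_eq)
qed

section \<open>Translates in \<beta>G\<close>

lemma umult_principal_left: "umult (principal g) r = {A. {y. gmul g y \<in> A} \<in> r}"
  by (simp add: umult_def principal_def)

lemma umult_principal_right: "umult q (principal g) = {A. {x. gmul x g \<in> A} \<in> q}"
  by (simp add: umult_def principal_def)

lemma uf_umult_principal_left: "is_ultrafilter r \<Longrightarrow> is_ultrafilter (umult (principal g) r)"
  using uf_vimage[of r "gmul g"] by (simp add: umult_principal_left vimage_def)

lemma uf_umult_principal_right: "is_ultrafilter q \<Longrightarrow> is_ultrafilter (umult q (principal g))"
  using uf_vimage[of q "\<lambda>x. gmul x g"] by (simp add: umult_principal_right vimage_def)

lemma nonprincipal_umult_principal_left: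
  assumes "nonprincipal r"
  shows "nonprincipal (umult (principal g) r)"
proof -
  have "{y. gmul g y \<in> {z}} = {gmul (ginv g) z}" for z
    by (auto simp flip: fg.assoc)
  then show ?thesis
    using assms by (simp add: nonprincipal_def umult_principal_left)
qed

lemma nonprincipal_umult_principal_right:
  assumes "nonprincipal q"
  shows "nonprincipal (umult q (principal g))"
proof -
  have "{y. gmul y g \<in> {z}} = {gmul z (ginv g)}" for z
    by (auto simp: fg.assoc)
  then show ?thesis
    using assms by (simp add: nonprincipal_def umult_principal_right)
qed

lemma umult_principal_left_assoc:
  "umult (principal g) (umult (principal h) r) = umult (principal (gmul g h)) r"
  by (simp add: umult_principal_left fg.assoc)

lemma umult_principal_right_assoc:
  "umult (umult q (principal g)) (principal h) = umult q (principal (gmul g h))"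
  by (simp add: umult_principal_right fg.assoc)

lemma umult_principal_gone_left [simp]: "umult (principal gone) r = r"
  by (simp add: umult_principal_left)

lemma umult_principal_gone_right [simp]: "umult q (principal gone) = q"
  by (simp add: umult_principal_right)

lemma umult_shift:
  assumes "gmul g h = gone"
  shows "umult (umult q (principal g)) (umult (principal h) r) = umult q r"
proof -
  have "gmul (gmul x g) (gmul h y) = gmul x y" for x y
    using assms by (metis fg.assoc fg.left_neutral)
  then show ?thesis
    by (simp add: umult_def principal_def)
qed

lemma umult_principal_right_eq:
  assumes "umult q (principal w) = p"
  shows "q = umult p (principal (ginv w))"
  by (simp add: umult_principal_right_assoc flip: assms)

lemma umult_principal_left_eq:
  assumes "umult (principal x) r = p"
  shows "r = umult (principal (ginv x)) p"
  by (simp add: umult_principal_left_assoc flip: assms)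

section \<open>Block sequences\<close>

definition blocks :: "(nat \<Rightarrow> nat set) \<Rightarrow> bool" where
  "blocks D \<longleftrightarrow> (\<forall>n. finite (D n) \<and> D n \<noteq> {}) \<and> (\<forall>n. less_sets (D n) (D (Suc n)))"

definition block_unions :: "(nat \<Rightarrow> nat set) \<Rightarrow> nat set set" where
  "block_unions D = {\<Union>(D ` H) | H. finite H \<and> H \<noteq> {}}"

lemma blocks_finite: "blocks D \<Longrightarrow> finite (D n)"
  by (simp add: blocks_def)

lemma blocks_nonempty: "blocks D \<Longrightarrow> D n \<noteq> {}"
  by (simp add: blocks_def)

lemma less_sets_trans: "less_sets A B \<Longrightarrow> less_sets B C \<Longrightarrow> B \<noteq> {} \<Longrightarrow> less_sets A C"
  unfolding less_sets_def by (meson all_not_in_conv order.strict_trans)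

lemma blocks_less:
  assumes "blocks D" "n < m"
  shows "less_sets (D n) (D m)"
  using assms(2)
proof (induction m)
  case (Suc m)
  then show ?case
    using assms(1) less_sets_trans[of "D n" "D m"]
    by (cases "n = m") (auto simp: blocks_def less_Suc_eq)
qed simp

lemma blocks_between:
  assumes "blocks D" "a \<in> D k" "b \<in> D k" "f \<in> D n" "a \<le> f" "f \<le> b"
  shows "n = k"
proof (rule ccontr)
  assume "n \<noteq> k"
  then have "less_sets (D n) (D k) \<or> less_sets (D k) (D n)"
    using blocks_less[OF assms(1)] by (meson linorder_neqE_nat)
  then show False
    using assms(2-6) by (force simp: less_sets_def)
qed

lemma blocks_unique: "blocks D \<Longrightarrow> e \<in> D k \<Longrightarrow> e \<in> D n \<Longrightarrow> n = k"
  using blocks_between[of D e k e e n] by simp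

lemma blocks_eventually_above:
  assumes "blocks D" "finite S"
  shows "\<exists>k. less_sets S (D k)"
proof -
  have "n \<le> Min (D n)" for n
  proof (induction n)
    case (Suc n)
    have "Min (D m) \<in> D m" for m
      using Min_in[OF blocks_finite[OF assms(1)] blocks_nonempty[OF assms(1)]] .
    then have "Min (D n) < Min (D (Suc n))"
      using assms(1) unfolding blocks_def less_sets_def by blast
    then show ?case
      using Suc by simp
  qed simp
  then have "less_sets S (D (Suc (Max (insert 0 S))))"
    unfolding less_sets_def
  proof (intro ballI)
    fix s e
    assume "s \<in> S" "e \<in> D (Suc (Max (insert 0 S)))"
    moreover from this have "s < Suc (Max (insert 0 S))"
      using assms(2) by (simp add: le_imp_less_Suc)
    ultimately show "s < e"
      using \<open>\<And>n. n \<le> Min (D n)\<close> blocks_finite[OF assms(1)]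
      by (meson Min_le order.strict_trans2 order.trans)
  qed
  then show ?thesis ..
qed

lemma block_unions_finite: "blocks D \<Longrightarrow> V \<in> block_unions D \<Longrightarrow> finite V \<and> V \<noteq> {}"
  by (auto simp: block_unions_def blocks_def)

lemma block_unions_block: "blocks D \<Longrightarrow> V \<in> block_unions D \<Longrightarrow> e \<in> V \<Longrightarrow> e \<in> D k \<Longrightarrow> D k \<subseteq> V"
  by (auto simp: block_unions_def dest: blocks_unique)

lemma pword_block_unions_subset: "blocks D \<Longrightarrow> pword ` block_unions D \<subseteq> pwords"
  by (auto simp: pwords_def dest: block_unions_finite)

lemma pword_in_block_unions:
  assumes "blocks D" "finite V" "pword V \<in> pword ` block_unions D"
  shows "V \<in> block_unions D"
  using assms pword_inject block_unions_finite by blast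

lemma gprod_pword:
  assumes "sorted_wrt (<) ns" "\<And>i j. i < j \<Longrightarrow> less_sets (E i) (E j)" "\<And>i. finite (E i)"
  shows "gprod (map (\<lambda>n. pword (E n)) ns) = pword (\<Union>n\<in>set ns. E n)"
  using assms(1)
proof (induction ns)
  case (Cons n ns)
  have "less_sets (E n) (\<Union>m\<in>set ns. E m)"
    using Cons.prems assms(2) unfolding less_sets_def by fastforce
  then have "gmul (pword (E n)) (pword (\<Union>m\<in>set ns. E m)) = pword (E n \<union> (\<Union>m\<in>set ns. E m))"
    using assms(3) by (simp add: gmul_pword)
  then show ?case
    using Cons by (simp add: gprod_def)
qed (simp add: gprod_def)

lemma FP_product_subsystem_gen:
  assumes "product_subsystem y gen"
  shows "\<exists>D. blocks D \<and> FP y = pword ` block_unions D"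
proof -
  obtain a where a: "\<forall>n. finite (a n) \<and> a n \<noteq> {}" "\<forall>n. Max (a n) < Min (a (Suc n))"
    "\<forall>n. y n = gprod (map gen (sorted_list_of_set (a n)))"
    using assms by (auto simp: product_subsystem_def)
  have D: "blocks a"
    using a(1,2) unfolding blocks_def less_sets_def
    by (meson Max_ge Min_le le_less_trans less_le_trans)
  have gen: "gen = (\<lambda>n. pword {n})"
    by (simp add: fun_eq_iff gen_def pword_def)
  have "gprod (map (\<lambda>n. pword {n}) (sorted_list_of_set A)) = pword A" if "finite A" for A
    using gprod_pword[of "sorted_list_of_set A" "\<lambda>n. {n}"] that by (simp add: less_sets_def)
  then have y: "y = (\<lambda>n. pword (a n))"
    using a(1,3) gen by auto
  have "gprod (map y (sorted_list_of_set H)) = pword (\<Union>(a ` H))" if "finite H" for H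
    using gprod_pword[of "sorted_list_of_set H" a] that blocks_less[OF D] a(1) y by simp
  then have "FP y = pword ` block_unions a"
    unfolding FP_def block_unions_def by auto
  then show ?thesis
    using D by blast
qed

lemma very_strongly_productive_blocks:
  assumes "very_strongly_productive p" "A \<in> p"
  shows "\<exists>D. blocks D \<and> pword ` block_unions D \<subseteq> A \<and> pword ` block_unions D \<in> p"
  using assms FP_product_subsystem_gen by (metis very_strongly_productive_def)

lemma pwords_in_vsp:
  assumes "is_ultrafilter p" "very_strongly_productive p"
  shows "pwords \<in> p"
  using very_strongly_productive_blocks[OF assms(2) uf_UNIV[OF assms(1)]]
    uf_mono[OF assms(1)] pword_block_unions_subset by metis

section \<open>Nonprincipal factors concentrated on increasing words\<close>

lemma less_sets_Max_iff: "finite A \<Longrightarrow> A \<noteq> {} \<Longrightarrow> less_sets A U \<longleftrightarrow> (\<forall>e\<in>U. Max A < e)"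
  by (auto simp: less_sets_def)

lemma gmul_pword_eq_pwordD:
  assumes "finite A" "finite U" "finite V" "gmul (pword A) (pword U) = pword V"
  shows "less_sets A U \<and> V = A \<union> U"
  using gmul_pword_eq_pword(3)[OF assms(2-4)] normal_parts_pword[OF assms(1)] by auto

lemma block_union_side:
  assumes "blocks D" "finite A" "A \<noteq> {}" "Max A \<in> D k" "D k \<subseteq> A" "less_sets A U"
    and AU: "A \<union> U = \<Union>(D ` H)" and n: "n \<in> H" "e \<in> D n"
  shows "e \<in> A \<longleftrightarrow> n \<le> k"
proof (cases n k rule: linorder_cases)
  case less
  then have "e < Max A"
    using blocks_less[OF assms(1)] assms(4) n(2) by (auto simp: less_sets_def)
  moreover have "e \<in> A \<union> U"
    using AU n by blast
  moreover have "Max A < e" if "e \<in> U"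
    using assms(2,3,6) that less_sets_Max_iff by blast
  ultimately have "e \<in> A"
    by (meson UnE order.asym)
  then show ?thesis
    using less by simp
next
  case greater
  then have "Max A < e"
    using blocks_less[OF assms(1)] assms(4) n(2) by (auto simp: less_sets_def)
  then show ?thesis
    using greater Max_ge[OF assms(2), of e] by auto
qed (use assms(5) n in auto)

lemma block_union_split:
  assumes "blocks D" "finite A" "A \<noteq> {}" "Max A \<in> D k" "D k \<subseteq> A" "less_sets A U"
    and AU: "A \<union> U = \<Union>(D ` H)"
  shows "A = \<Union>(D ` {n\<in>H. n \<le> k})" and "U = \<Union>(D ` {n\<in>H. k < n})"
proof -
  note side = block_union_side[OF assms]
  have "e \<in> A \<longleftrightarrow> (\<exists>n\<in>H. n \<le> k \<and> e \<in> D n)" for e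
    using side AU by blast
  moreover have "e \<in> U \<longleftrightarrow> (\<exists>n\<in>H. k < n \<and> e \<in> D n)" for e
  proof
    assume e: "e \<in> U"
    then obtain n where "n \<in> H" "e \<in> D n"
      using AU by blast
    moreover have "e \<notin> A"
      using assms(6) e by (auto simp: less_sets_def)
    ultimately show "\<exists>n\<in>H. k < n \<and> e \<in> D n"
      using side not_le by blast
  next
    assume "\<exists>n\<in>H. k < n \<and> e \<in> D n"
    then show "e \<in> U"
      using side AU by force
  qed
  ultimately show "A = \<Union>(D ` {n\<in>H. n \<le> k})" and "U = \<Union>(D ` {n\<in>H. k < n})"
    by auto
qed

lemma block_union_cut:
  assumes "blocks D" "finite A" "A \<noteq> {}" "Max A \<in> D k" "\<not> D k \<subseteq> A" "less_sets A U"
    and AU: "A \<union> U = \<Union>(D ` H)" and "finite U"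
  shows "U \<noteq> {}" and "Min U = Min (D k - A)"
proof -
  define c where "c = Min (D k - A)"
  have fin: "finite (D k - A)" and ne: "D k - A \<noteq> {}"
    using assms(5) blocks_finite[OF assms(1)] by auto
  have c: "c \<in> D k - A" "\<And>e. e \<in> D k - A \<Longrightarrow> c \<le> e"
    unfolding c_def using Min_in[OF fin ne] Min_le[OF fin] by auto
  have "Max A \<in> \<Union>(D ` H)"
    unfolding AU[symmetric] using Max_in[OF assms(2,3)] by blast
  then obtain n where "n \<in> H" "Max A \<in> D n"
    by blast
  then have "k \<in> H"
    using blocks_unique[OF assms(1) assms(4)] by simp
  then have "c \<in> A \<union> U"
    unfolding AU using c(1) by blast
  then have "c \<in> U"
    using c(1) by blast
  moreover have "c \<le> e" if "e \<in> U" for e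
  proof -
    have "e \<in> \<Union>(D ` H)"
      unfolding AU[symmetric] using that by blast
    then obtain n where n: "n \<in> H" "e \<in> D n"
      by blast
    have "Max A < e" "e \<notin> A"
      using assms(2,3,6) that less_sets_Max_iff[of A U] by (auto simp: less_sets_def)
    show ?thesis
    proof (cases n k rule: linorder_cases)
      case less
      then have "e < Max A"
        using blocks_less[OF assms(1) less] n(2) assms(4) by (simp add: less_sets_def)
      with \<open>Max A < e\<close> show ?thesis
        by simp
    next
      case equal
      then show ?thesis
        using c(2) n(2) \<open>e \<notin> A\<close> by simp
    next
      case greater
      then show ?thesis
        using blocks_less[OF assms(1) greater] n(2) c(1) by (simp add: less_sets_def less_imp_le)
    qed
  qed
  ultimately show "U \<noteq> {}" "Min U = c"
    using Min_eqI[OF assms(8)] by auto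
qed

lemma block_unionsI: "finite H \<Longrightarrow> V = \<Union>(D ` H) \<Longrightarrow> V \<noteq> {} \<Longrightarrow> V \<in> block_unions D"
  by (auto simp: block_unions_def)

lemma pword_mult_block_union:
  assumes "blocks D" "finite A" "u \<in> pwords" "gmul (pword A) u \<in> pword ` block_unions D"
  shows "less_sets A (indices u)" and "\<exists>H. finite H \<and> A \<union> indices u = \<Union>(D ` H)"
proof -
  obtain V where V: "V \<in> block_unions D" "gmul (pword A) u = pword V"
    using assms(4) by blast
  have "finite (indices u)" "u = pword (indices u)"
    using assms(3) by (auto elim: pwordsE)
  then have "less_sets A (indices u) \<and> V = A \<union> indices u"
    using V assms(2) block_unions_finite[OF assms(1)] gmul_pword_eq_pwordD[of A "indices u" V]
    by metis
  then show "less_sets A (indices u)" "\<exists>H. finite H \<and> A \<union> indices u = \<Union>(D ` H)"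
    using V(1) by (auto simp: block_unions_def)
qed

lemma word_split_or_cut:
  assumes "blocks D" "a \<in> pwords" "u0 \<in> R" "R \<subseteq> pwords"
    and RD: "\<And>u. u \<in> R \<Longrightarrow> gmul a u \<in> pword ` block_unions D"
  shows "(a \<in> pword ` block_unions D \<and> R \<subseteq> pword ` block_unions D)
    \<or> (\<exists>c. indices a \<subseteq> {..<c} \<and> (\<forall>u\<in>R. Min (indices u) = c))"
proof -
  define A where "A = indices a"
  have A: "finite A" "A \<noteq> {}" "a = pword A"
    using assms(2) by (auto simp: A_def elim: pwordsE)
  have U: "finite (indices u)" "indices u \<noteq> {}" "less_sets A (indices u)"
    "\<exists>H. finite H \<and> A \<union> indices u = \<Union>(D ` H)" if u: "u \<in> R" for u
    using u assms(4) pword_mult_block_union[OF assms(1) A(1), of u] RD[OF u] A(3)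
    by (auto elim: pwordsE)
  obtain H0 where H0: "finite H0" "A \<union> indices u0 = \<Union>(D ` H0)"
    using U(4)[OF assms(3)] by blast
  have "Max A \<in> \<Union>(D ` H0)"
    unfolding H0(2)[symmetric] using Max_in[OF A(1,2)] by blast
  then obtain k where k: "Max A \<in> D k"
    by blast
  show ?thesis
  proof (cases "D k \<subseteq> A")
    case True
    have "A \<in> block_unions D"
      using block_unionsI[OF _ block_union_split(1)[OF assms(1) A(1,2) k True U(3)[OF assms(3)] H0(2)]]
        H0(1) A(2) by simp
    moreover have "indices u \<in> block_unions D" if u: "u \<in> R" for u
    proof -
      obtain H where H: "finite H" "A \<union> indices u = \<Union>(D ` H)"
        using U(4)[OF u] by blast
      show ?thesis
        using block_unionsI[OF _ block_union_split(2)[OF assms(1) A(1,2) k True U(3)[OF u] H(2)]]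
          H(1) U(2)[OF u] by simp
    qed
    ultimately show ?thesis
      using A(3) assms(4) by (auto elim!: pwordsE)
  next
    case False
    have "Min (indices u) = Min (D k - A)" if "u \<in> R" for u
      using block_union_cut(2)[OF assms(1) A(1,2) k False U(3)[OF that] _ U(1)[OF that]] U(4)[OF that]
      by blast
    moreover have "A \<subseteq> {..<Min (indices u0)}"
      using U(3)[OF assms(3)] Min_in[OF U(1,2)[OF assms(3)]] by (auto simp: less_sets_def)
    ultimately show ?thesis
      using assms(3) unfolding A_def by metis
  qed
qed

text \<open>Any two of the sets R a meet, so all a \<in> C share the same bound c.\<close>

lemma finite_if_common_least_index:
  assumes r: "is_ultrafilter r" and R: "\<And>a. a \<in> C \<Longrightarrow> R a \<in> r" and "C \<subseteq> pwords"
    and cut: "\<And>a. a \<in> C \<Longrightarrow> \<exists>c. indices a \<subseteq> {..<c} \<and> (\<forall>u\<in>R a. Min (indices u) = c)"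
  shows "finite C"
proof (cases "C = {}")
  case False
  then obtain a0 c0 where a0: "a0 \<in> C" and c0: "\<forall>u\<in>R a0. Min (indices u) = c0"
    using cut by blast
  have "C \<subseteq> pword ` Pow {..<c0}"
  proof
    fix a
    assume a: "a \<in> C"
    then obtain c where c: "indices a \<subseteq> {..<c}" "\<forall>u\<in>R a. Min (indices u) = c"
      using cut by blast
    obtain u where "u \<in> R a" "u \<in> R a0"
      using uf_nonempty[OF r uf_Int[OF r R R]] a a0 by blast
    then have "c = c0"
      using c(2) c0 by metis
    moreover have "a = pword (indices a)"
      using a assms(3) by (auto elim: pwordsE)
    ultimately show "a \<in> pword ` Pow {..<c0}"
      using c(1) by blast
  qed
  then show ?thesis
    by (rule finite_subset) simp
qed simp

lemma block_words_in_factors: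
  assumes q: "is_ultrafilter q" and r: "is_ultrafilter r" and nq: "nonprincipal q"
    and "pwords \<in> q" "pwords \<in> r" and D: "blocks D"
    and X: "pword ` block_unions D \<in> umult q r"
  shows "pword ` block_unions D \<in> q \<and> pword ` block_unions D \<in> r"
proof -
  define X where "X = pword ` block_unions D"
  define R where "R a = {u. gmul a u \<in> X} \<inter> pwords" for a
  define Q where "Q = {a. {u. gmul a u \<in> X} \<in> r} \<inter> pwords"
  define Cut where "Cut = {a\<in>Q. \<not> (a \<in> X \<and> R a \<subseteq> X)}"
  have "Q \<in> q"
    using X assms(4) uf_Int[OF q] by (simp add: Q_def X_def umult_def)
  have R: "R a \<in> r" if "a \<in> Q" for a
    using that assms(5) uf_Int[OF r] by (simp add: Q_def R_def)
  have "finite Cut"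
  proof (rule finite_if_common_least_index[OF r])
    fix a
    assume a: "a \<in> Cut"
    obtain u0 where "u0 \<in> R a"
      using uf_nonempty[OF r R] a by (auto simp: Cut_def)
    then show "\<exists>c. indices a \<subseteq> {..<c} \<and> (\<forall>u\<in>R a. Min (indices u) = c)"
      using word_split_or_cut[OF D _ \<open>u0 \<in> R a\<close>] a
      by (auto simp: Cut_def Q_def R_def X_def)
  qed (auto simp: Cut_def Q_def intro: R)
  then have "Q - Cut \<in> q"
    using nonprincipal_Diff_finite[OF q nq] \<open>Q \<in> q\<close> by blast
  moreover have "Q - Cut \<subseteq> X"
    by (auto simp: Cut_def)
  moreover obtain a where "a \<in> Q - Cut"
    using uf_nonempty[OF q \<open>Q - Cut \<in> q\<close>] by blast
  then have "R a \<subseteq> X"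
    by (auto simp: Cut_def)
  ultimately show ?thesis
    using uf_mono[OF q] uf_mono[OF r R] \<open>a \<in> Q - Cut\<close> unfolding X_def by blast
qed

lemma factors_in_pwords_eq:
  assumes p: "is_ultrafilter p" and "very_strongly_productive p"
    and q: "is_ultrafilter q" and r: "is_ultrafilter r" and "nonprincipal q"
    and "pwords \<in> q" "pwords \<in> r" and qr: "umult q r = p"
  shows "q = p \<and> r = p"
proof -
  have "A \<in> q \<and> A \<in> r" if A: "A \<in> p" for A
  proof -
    obtain D where "blocks D" "pword ` block_unions D \<subseteq> A" "pword ` block_unions D \<in> p"
      using very_strongly_productive_blocks[OF assms(2) A] by blast
    then show ?thesis
      using block_words_in_factors[OF q r assms(5-7)] qr uf_mono[OF q] uf_mono[OF r] by metis
  qed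
  then show ?thesis
    using uf_subset_imp_eq p q r by blast
qed

section \<open>Reduction to factors concentrated on increasing words\<close>

definition convex_in :: "nat set \<Rightarrow> nat set \<Rightarrow> bool" where
  "convex_in F V \<longleftrightarrow> (\<forall>f\<in>F. (\<exists>a\<in>V. a \<le> f) \<and> (\<exists>b\<in>V. f \<le> b) \<longrightarrow> f \<in> V)"

definition pwords_with :: "(nat set \<Rightarrow> bool) \<Rightarrow> fg set" where
  "pwords_with P = pword ` {V. finite V \<and> V \<noteq> {} \<and> P V}"

lemma pwords_with_indices: "w \<in> pwords_with P \<Longrightarrow> P (indices w)"
  by (auto simp: pwords_with_def)

lemma pword_in_pwords_with: "finite V \<Longrightarrow> pword V \<in> pwords_with P \<Longrightarrow> P V"
  using pwords_with_indices by fastforce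

lemma pwords_subset_pwords_with: "pwords \<subseteq> pwords_with P \<union> pwords_with (\<lambda>V. \<not> P V)"
  by (auto simp: pwords_def pwords_with_def)

lemma infinite_nat_greater:
  assumes "infinite (F :: nat set)" "finite S"
  shows "\<exists>g\<in>F. \<forall>s\<in>S. s < g"
proof -
  obtain g where "g \<in> F" "\<not> g \<le> Max (insert 0 S)"
    using assms(1) finite_nat_set_iff_bounded_le[of F] by blast
  moreover have "s \<le> Max (insert 0 S)" if "s \<in> S" for s
    using that assms(2) by simp
  ultimately show ?thesis
    by (meson le_less_trans not_le)
qed

lemma convex_words_notin_vsp:
  assumes "very_strongly_productive p"
  shows "pwords_with (\<lambda>V. V \<subseteq> F \<and> convex_in F V) \<notin> p"
proof
  assume "pwords_with (\<lambda>V. V \<subseteq> F \<and> convex_in F V) \<in> p"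
  then obtain D where D: "blocks D" "pword ` block_unions D \<subseteq> pwords_with (\<lambda>V. V \<subseteq> F \<and> convex_in F V)"
    using very_strongly_productive_blocks[OF assms] by blast
  have convex: "V \<subseteq> F \<and> convex_in F V" if "finite H" "H \<noteq> {}" "V = \<Union>(D ` H)" for H V
  proof -
    have "finite V"
      using that blocks_finite[OF D(1)] by blast
    moreover have "pword V \<in> pword ` block_unions D"
      using that by (auto simp: block_unions_def)
    ultimately show ?thesis
      using D(2) pword_in_pwords_with by blast
  qed
  obtain a f b where "a \<in> D 0" "f \<in> D 1" "b \<in> D 2"
    using blocks_nonempty[OF D(1)] by (metis ex_in_conv)
  moreover have "less_sets (D 0) (D 1)" "less_sets (D 1) (D 2)"
    using blocks_less[OF D(1)] by simp_all
  moreover have "D 1 \<subseteq> F" "convex_in F (D 0 \<union> D 2)"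
    using convex[of "{1}"] convex[of "{0, 2}"] by auto
  ultimately have "a < f" "f < b" "f \<in> F" "D 1 \<subseteq> F" "convex_in F (D 0 \<union> D 2)"
    by (auto simp: less_sets_def)
  then have "f \<in> D 0 \<union> D 2"
    using \<open>a \<in> D 0\<close> \<open>b \<in> D 2\<close> unfolding convex_in_def by (meson UnCI less_imp_le)
  then show False
    using \<open>f \<in> D 1\<close> \<open>less_sets (D 0) (D 1)\<close> \<open>less_sets (D 1) (D 2)\<close>
    by (auto simp: less_sets_def)
qed

locale pwords_factorization =
  fixes p q r :: "fg set set"
  assumes uf_p: "is_ultrafilter p" and vsp: "very_strongly_productive p"
    and uf_q: "is_ultrafilter q" and uf_r: "is_ultrafilter r"
    and prod: "umult q r = p" and pwords_r: "pwords \<in> r"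
begin

definition Q :: "fg set" where
  "Q = {x. {u. gmul x u \<in> pwords} \<in> r}"

definition R :: "fg \<Rightarrow> fg set" where
  "R x = {u. gmul x u \<in> pwords} \<inter> pwords"

definition F :: "nat set" where
  "F = \<Union>(neg_part ` Q)"

lemma Q_in_q: "Q \<in> q"
  using pwords_in_vsp[OF uf_p vsp] by (simp add: Q_def umult_def flip: prod)

lemma R_in_r: "x \<in> Q \<Longrightarrow> R x \<in> r"
  using uf_Int[OF uf_r _ pwords_r] by (simp add: Q_def R_def)

lemma R_decomposition:
  assumes "u \<in> R x"
  shows "normal_pair (pos_part x) (neg_part x)"
    and "x = gmul (pword (pos_part x)) (ginv (pword (neg_part x)))"
    and "\<exists>T. indices u = neg_part x \<union> T \<and> indices (gmul x u) = pos_part x \<union> T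
      \<and> less_sets (neg_part x) T \<and> less_sets (pos_part x) T"
proof -
  have "finite (indices u)" "u = pword (indices u)"
    "finite (indices (gmul x u))" "gmul x u = pword (indices (gmul x u))"
    using assms by (auto simp: R_def elim!: pwordsE)
  then show "normal_pair (pos_part x) (neg_part x)"
    and "x = gmul (pword (pos_part x)) (ginv (pword (neg_part x)))"
    and "\<exists>T. indices u = neg_part x \<union> T \<and> indices (gmul x u) = pos_part x \<union> T
      \<and> less_sets (neg_part x) T \<and> less_sets (pos_part x) T"
    using gmul_pword_eq_pword[of "indices u" "indices (gmul x u)" x] by metis+
qed

lemma finite_parts: "x \<in> Q \<Longrightarrow> finite (pos_part x \<union> neg_part x)"
  using uf_nonempty[OF uf_r R_in_r] R_decomposition(1) by (fastforce simp: normal_pair_def)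

lemma neg_part_subset_indices: "u \<in> R x \<Longrightarrow> neg_part x \<subseteq> indices u"
  using R_decomposition(3) by blast

lemma indices_translate:
  assumes "u \<in> R x" "e \<notin> pos_part x \<union> neg_part x"
  shows "e \<in> indices (gmul x u) \<longleftrightarrow> e \<in> indices u"
  using R_decomposition(3)[OF assms(1)] assms(2) by auto

lemma indices_below_neg_part:
  assumes "u \<in> R z" "e \<in> indices u" "e' \<in> neg_part z" "e \<le> e'"
  shows "e \<in> neg_part z"
  using R_decomposition(3)[OF assms(1)] assms(2-4) by (force simp: less_sets_def)

lemma F_below_neg_part:
  assumes "f \<in> F" "z \<in> Q" "e \<in> neg_part z" "f \<le> e"
  shows "f \<in> neg_part z"
proof -
  obtain y where y: "y \<in> Q" "f \<in> neg_part y"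
    using assms(1) by (auto simp: F_def)
  obtain u where "u \<in> R y" "u \<in> R z"
    using uf_nonempty[OF uf_r uf_Int[OF uf_r R_in_r R_in_r]] y(1) assms(2) by blast
  then show ?thesis
    using indices_below_neg_part neg_part_subset_indices y(2) assms(3,4) by blast
qed

lemma F_in_translate:
  assumes "z \<in> Q" "u \<in> R x" "u \<in> R z" "f \<in> F" "\<forall>s\<in>pos_part x \<union> neg_part x. s < f"
    "e \<in> neg_part z" "f \<le> e"
  shows "f \<in> indices (gmul x u)"
proof -
  have "f \<in> indices u"
    using F_below_neg_part[OF assms(4,1,6,7)] neg_part_subset_indices[OF assms(3)] by blast
  then show ?thesis
    using indices_translate[OF assms(2)] assms(5) by blast
qed

lemma translate_in_Q:
  assumes "A \<in> p"
  obtains x where "x \<in> Q" "{u. gmul x u \<in> A} \<in> r"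
proof -
  have "{x. {u. gmul x u \<in> A} \<in> r} \<in> q"
    using assms by (simp add: umult_def flip: prod)
  then show thesis
    using that uf_nonempty[OF uf_q uf_Int[OF uf_q Q_in_q]] by blast
qed

lemma block_union_agrees_with_F:
  assumes "infinite F" "blocks D" "x \<in> Q" and r: "{u. gmul x u \<in> pword ` block_unions D} \<in> r"
    and "finite E"
  obtains V e3 where "V \<in> block_unions D" "\<forall>e\<in>E. e < e3"
    "\<And>f. \<forall>s\<in>pos_part x \<union> neg_part x. s < f \<Longrightarrow> f \<le> e3 \<Longrightarrow> f \<in> V \<longleftrightarrow> f \<in> F"
proof -
  obtain e3 where e3: "e3 \<in> F" "\<forall>e\<in>E. e < e3"
    using infinite_nat_greater[OF assms(1,5)] by blast
  obtain x3 where x3: "x3 \<in> Q" "e3 \<in> neg_part x3"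
    using e3(1) by (auto simp: F_def)
  obtain u where u: "gmul x u \<in> pword ` block_unions D" "u \<in> R x" "u \<in> R x3"
    using uf_nonempty[OF uf_r uf_Int[OF uf_r r uf_Int[OF uf_r R_in_r R_in_r]]] assms(3) x3(1)
    by blast
  have V: "indices (gmul x u) \<in> block_unions D"
    using u(1,2) pword_in_block_unions[OF assms(2)] by (auto simp: R_def elim!: pwordsE)
  have agree: "f \<in> indices (gmul x u) \<longleftrightarrow> f \<in> F"
    if "\<forall>s\<in>pos_part x \<union> neg_part x. s < f" "f \<le> e3" for f
  proof
    assume "f \<in> indices (gmul x u)"
    then have "f \<in> indices u"
      using indices_translate[OF u(2)] that(1) by blast
    then have "f \<in> neg_part x3"
      using indices_below_neg_part[OF u(3) _ x3(2) that(2)] by blast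
    then show "f \<in> F"
      using x3(1) by (auto simp: F_def)
  qed (use F_in_translate[OF x3(1) u(2,3) _ that(1) x3(2) that(2)] in blast)
  show thesis
    by (rule that[OF V e3(2) agree])
qed

lemma block_above_meeting_F:
  assumes "infinite F" "blocks D" "x \<in> Q" and r: "{u. gmul x u \<in> pword ` block_unions D} \<in> r"
  shows "\<exists>k. less_sets (pos_part x \<union> neg_part x) (D k) \<and> D k \<inter> F \<noteq> {}"
proof -
  define S where "S = pos_part x \<union> neg_part x"
  obtain k0 where k0: "less_sets S (D k0)"
    using blocks_eventually_above[OF assms(2) finite_parts[OF assms(3)]] by (auto simp: S_def)
  obtain g where g: "g \<in> F" "\<forall>e\<in>D k0. e < g"
    using infinite_nat_greater[OF assms(1) blocks_finite[OF assms(2)]] by blast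
  obtain e0 where "e0 \<in> D k0"
    using blocks_nonempty[OF assms(2)] by blast
  then have gS: "\<forall>s\<in>S. s < g"
    using k0 g(2) by (fastforce simp: less_sets_def)
  obtain V e3 where V: "V \<in> block_unions D" "\<forall>e\<in>{g}. e < e3"
    and agree: "\<And>f. \<forall>s\<in>pos_part x \<union> neg_part x. s < f \<Longrightarrow> f \<le> e3 \<Longrightarrow> f \<in> V \<longleftrightarrow> f \<in> F"
    using block_union_agrees_with_F[OF assms, of "{g}"] by blast
  have "g \<in> V"
    using agree[of g] gS V(2) g(1) by (simp add: S_def)
  then obtain k where k: "g \<in> D k"
    using V(1) by (auto simp: block_unions_def)
  have "k0 < k"
  proof (rule ccontr)
    assume "\<not> k0 < k"
    then have "k = k0 \<or> less_sets (D k) (D k0)"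
      using blocks_less[OF assms(2)] by (auto simp: not_less le_less)
    then show False
      using g(2) k \<open>e0 \<in> D k0\<close> unfolding less_sets_def by (metis order.asym)
  qed
  then have "less_sets S (D k)"
    using k0 blocks_less[OF assms(2)] blocks_nonempty[OF assms(2)] less_sets_trans by blast
  then show ?thesis
    using k g(1) unfolding S_def by blast
qed

lemma block_in_F:
  assumes "infinite F" "blocks D" "x \<in> Q" and r: "{u. gmul x u \<in> pword ` block_unions D} \<in> r"
    and k: "less_sets (pos_part x \<union> neg_part x) (D k)" "g \<in> D k" "g \<in> F"
  shows "D k \<subseteq> F \<and> convex_in F (D k)"
proof -
  obtain V e3 where V: "V \<in> block_unions D" "\<forall>e\<in>D k. e < e3"
    and agree: "\<And>f. \<forall>s\<in>pos_part x \<union> neg_part x. s < f \<Longrightarrow> f \<le> e3 \<Longrightarrow> f \<in> V \<longleftrightarrow> f \<in> F"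
    using block_union_agrees_with_F[OF assms(1-4) blocks_finite[OF assms(2)]] by blast
  have between: "f \<in> V \<longleftrightarrow> f \<in> F"
    if "a \<in> D k" "a \<le> f" "b \<in> D k" "f \<le> b" for a b f
  proof (rule agree)
    have "\<forall>s\<in>pos_part x \<union> neg_part x. s < a" "b < e3"
      using k(1) V(2) that(1,3) by (simp_all add: less_sets_def)
    then show "\<forall>s\<in>pos_part x \<union> neg_part x. s < f" "f \<le> e3"
      using that(2,4) by (blast intro: order.strict_trans2, simp)
  qed
  have "g \<in> V"
    using between[OF k(2) order.refl k(2) order.refl] k(3) by simp
  then have "D k \<subseteq> V"
    using block_unions_block[OF assms(2) V(1) _ k(2)] by blast
  then have "D k \<subseteq> F"
    using between[OF _ order.refl _ order.refl] by blast
  moreover have "convex_in F (D k)"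
    unfolding convex_in_def
  proof (intro ballI impI)
    fix f
    assume "f \<in> F" "(\<exists>a\<in>D k. a \<le> f) \<and> (\<exists>b\<in>D k. f \<le> b)"
    then obtain a b where ab: "a \<in> D k" "a \<le> f" "b \<in> D k" "f \<le> b"
      by blast
    then have "f \<in> V"
      using between \<open>f \<in> F\<close> by blast
    then obtain n where "f \<in> D n"
      using V(1) by (auto simp: block_unions_def)
    then show "f \<in> D k"
      using blocks_between[OF assms(2) ab(1,3) _ ab(2,4)] by simp
  qed
  ultimately show ?thesis ..
qed

lemma nonconvex_words_notin:
  assumes "infinite F"
  shows "pwords_with (\<lambda>V. \<not> (V \<subseteq> F \<and> convex_in F V)) \<notin> p"
proof
  assume "pwords_with (\<lambda>V. \<not> (V \<subseteq> F \<and> convex_in F V)) \<in> p"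
  then obtain D where D: "blocks D" "pword ` block_unions D \<subseteq> pwords_with (\<lambda>V. \<not> (V \<subseteq> F \<and> convex_in F V))"
    "pword ` block_unions D \<in> p"
    using very_strongly_productive_blocks[OF vsp] by blast
  obtain x where x: "x \<in> Q" "{u. gmul x u \<in> pword ` block_unions D} \<in> r"
    using D(3) by (rule translate_in_Q)
  obtain k g where "less_sets (pos_part x \<union> neg_part x) (D k)" "g \<in> D k" "g \<in> F"
    using block_above_meeting_F[OF assms D(1) x] by blast
  then have "D k \<subseteq> F \<and> convex_in F (D k)"
    using block_in_F[OF assms D(1) x] by blast
  moreover have "pword (D k) \<in> pword ` block_unions D"
    using block_unionsI[of "{k}" "D k" D] blocks_nonempty[OF D(1)] by auto
  ultimately show False
    using D(2) pword_in_pwords_with blocks_finite[OF D(1)] by blast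
qed

theorem finite_neg_parts: "finite (neg_part ` Q)"
proof (rule ccontr)
  assume "infinite (neg_part ` Q)"
  then have "infinite F"
    using finite_subset[of "neg_part ` Q" "Pow F"] by (auto simp: F_def)
  let ?P = "\<lambda>V. V \<subseteq> F \<and> convex_in F V"
  have "pwords_with ?P \<union> pwords_with (\<lambda>V. \<not> ?P V) \<in> p"
    using uf_mono[OF uf_p pwords_in_vsp[OF uf_p vsp] pwords_subset_pwords_with] .
  then show False
    using uf_Un[OF uf_p] convex_words_notin_vsp[OF vsp] nonconvex_words_notin[OF \<open>infinite F\<close>]
    by blast
qed

lemma pwords_in_right_translate:
  assumes "nonprincipal q" "{x\<in>Q. neg_part x = B} \<in> q"
  shows "pwords \<in> umult q (principal (pword B))"
proof -
  have "gmul x (pword B) \<in> pwords \<union> {gone}" if x: "x \<in> Q" "neg_part x = B" for x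
  proof -
    obtain u where u: "u \<in> R x"
      using uf_nonempty[OF uf_r R_in_r[OF x(1)]] by blast
    have "gmul x (pword B) = pword (pos_part x)"
      using R_decomposition(2)[OF u] x(2) by (metis fg.assoc fg.left_inverse fg.right_neutral)
    then show ?thesis
      using R_decomposition(1)[OF u] pword_in_pwords_or_gone by (simp add: normal_pair_def)
  qed
  then have "{x\<in>Q. neg_part x = B} \<subseteq> {x. gmul x (pword B) \<in> pwords \<union> {gone}}"
    by blast
  then have "pwords \<union> {gone} \<in> umult q (principal (pword B))"
    using uf_mono[OF uf_q assms(2)] by (simp add: umult_principal_right)
  then show ?thesis
    using nonprincipal_Diff_finite[OF uf_umult_principal_right[OF uf_q]
        nonprincipal_umult_principal_right[OF assms(1)], of "{gone}"]
      uf_mono[OF uf_umult_principal_right[OF uf_q]] by blast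
qed

lemma pwords_in_left_translate:
  assumes "nonprincipal r" "x \<in> Q"
  shows "pwords \<in> umult (principal (ginv (pword (neg_part x)))) r"
proof -
  have "gmul (ginv (pword (neg_part x))) u \<in> pwords \<union> {gone}" if u: "u \<in> R x" for u
  proof -
    obtain T where T: "indices u = neg_part x \<union> T" "less_sets (neg_part x) T"
      using R_decomposition(3)[OF u] by blast
    have "finite (indices u)" "u = pword (indices u)"
      using u by (auto simp: R_def elim!: pwordsE)
    then have "finite T" "u = gmul (pword (neg_part x)) (pword T)"
      using T gmul_pword[of "neg_part x" T] by auto
    then show ?thesis
      using pword_in_pwords_or_gone by (simp flip: fg.assoc)
  qed
  then have "R x \<subseteq> {u. gmul (ginv (pword (neg_part x))) u \<in> pwords \<union> {gone}}"
    by blast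
  then have "pwords \<union> {gone} \<in> umult (principal (ginv (pword (neg_part x)))) r"
    using uf_mono[OF uf_r R_in_r[OF assms(2)]] by (simp add: umult_principal_left)
  then show ?thesis
    using nonprincipal_Diff_finite[OF uf_umult_principal_left[OF uf_r]
        nonprincipal_umult_principal_left[OF assms(1)], of "{gone}"]
      uf_mono[OF uf_umult_principal_left[OF uf_r]] by blast
qed

lemma factors_are_translates:
  assumes "nonprincipal q" "nonprincipal r"
  shows "\<exists>w. r = umult (principal w) p \<and> q = umult p (principal (ginv w))"
proof -
  have "Q \<subseteq> (\<Union>B\<in>neg_part ` Q. {x\<in>Q. neg_part x = B})"
    by blast
  then obtain B where B: "B \<in> neg_part ` Q" "{x\<in>Q. neg_part x = B} \<in> q"
    using uf_finite_UN[OF uf_q finite_neg_parts] uf_mono[OF uf_q Q_in_q] by meson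
  then obtain x0 where x0: "x0 \<in> Q" "neg_part x0 = B"
    by blast
  define q' where "q' = umult q (principal (pword B))"
  define r' where "r' = umult (principal (ginv (pword B))) r"
  have "q' = p \<and> r' = p"
  proof (rule factors_in_pwords_eq[OF uf_p vsp])
    show "is_ultrafilter q'" "is_ultrafilter r'" "nonprincipal q'"
      using uf_q uf_r assms(1)
      by (simp_all add: q'_def r'_def uf_umult_principal_right uf_umult_principal_left
          nonprincipal_umult_principal_right)
    show "pwords \<in> q'" "pwords \<in> r'"
      using pwords_in_right_translate[OF assms(1) B(2)] pwords_in_left_translate[OF assms(2) x0(1)]
        x0(2) by (simp_all add: q'_def r'_def)
    show "umult q' r' = p"
      using umult_shift[of "pword B" "ginv (pword B)"] prod by (simp add: q'_def r'_def)
  qed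
  moreover have "r = umult (principal (pword B)) r'" "q = umult q' (principal (ginv (pword B)))"
    by (simp_all add: q'_def r'_def umult_principal_left_assoc umult_principal_right_assoc)
  ultimately show ?thesis
    by blast
qed

end

lemma nonprincipal_factorization:
  assumes p: "is_ultrafilter p" and vsp: "very_strongly_productive p"
    and q: "is_ultrafilter q" and r: "is_ultrafilter r" and "nonprincipal q" "nonprincipal r"
    and qr: "umult q r = p"
  shows "\<exists>w. r = umult (principal w) p \<and> q = umult p (principal (ginv w))"
proof -
  have "{x. {u. gmul x u \<in> pwords} \<in> r} \<in> q"
    using pwords_in_vsp[OF p vsp] by (simp add: umult_def flip: qr)
  then obtain x0 where x0: "{u. gmul x0 u \<in> pwords} \<in> r"
    using uf_nonempty[OF q] by blast
  define r1 where "r1 = umult (principal x0) r"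
  define q1 where "q1 = umult q (principal (ginv x0))"
  interpret pwords_factorization p q1 r1
  proof
    show "is_ultrafilter q1" "is_ultrafilter r1"
      using q r by (simp_all add: q1_def r1_def uf_umult_principal_left uf_umult_principal_right)
    show "umult q1 r1 = p"
      using umult_shift[of "ginv x0" x0 q r] qr by (simp add: q1_def r1_def)
    show "pwords \<in> r1"
      using x0 by (simp add: r1_def umult_principal_left)
  qed (fact p vsp)+
  obtain w where w: "r1 = umult (principal w) p" "q1 = umult p (principal (ginv w))"
    using factors_are_translates assms(5,6)
      nonprincipal_umult_principal_left nonprincipal_umult_principal_right
    unfolding q1_def r1_def by blast
  have "r = umult (principal (ginv x0)) r1"
    by (simp add: r1_def umult_principal_left_assoc)
  then have "r = umult (principal (gmul (ginv x0) w)) p"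
    using w(1) by (simp add: umult_principal_left_assoc)
  moreover have "q = umult q1 (principal x0)"
    by (simp add: q1_def umult_principal_right_assoc)
  then have "q = umult p (principal (ginv (gmul (ginv x0) w)))"
    using w(2) by (simp add: umult_principal_right_assoc fg.inverse_distrib_swap)
  ultimately show ?thesis
    by blast
qed

theorem mainTheorem18:
  fixes p :: "fg set set"
  assumes "is_ultrafilter p" and "freeS \<in> p" and "very_strongly_productive p"
  shows "(\<forall>q r. is_ultrafilter q \<and> is_ultrafilter r \<and> umult q r = p \<longrightarrow>
            (\<exists>w. (r = umult (principal w) p \<and> q = umult p (principal (ginv w)))
               \<or> (r = principal w \<and> q = umult p (principal (ginv w)))
               \<or> (r = umult (principal w) p \<and> q = principal (ginv w))))
       \<and> (\<forall>q r. is_ultrafilter q \<and> is_ultrafilter r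
            \<and> q \<notin> range principal \<and> r \<notin> range principal \<and> umult q r = p \<longrightarrow>
            (\<exists>w. r = umult (principal w) p \<and> q = umult p (principal (ginv w))))"
proof (intro conjI allI impI)
  fix q r
  assume "is_ultrafilter q \<and> is_ultrafilter r \<and> q \<notin> range principal \<and> r \<notin> range principal
    \<and> umult q r = p"
  then show "\<exists>w. r = umult (principal w) p \<and> q = umult p (principal (ginv w))"
    using nonprincipal_factorization[OF assms(1,3)] nonprincipal_iff by blast
next
  fix q r
  assume qr: "is_ultrafilter q \<and> is_ultrafilter r \<and> umult q r = p"
  consider (right) w where "r = principal w" | (left) x where "q = principal x"
    | (nonprincipal) "q \<notin> range principal" "r \<notin> range principal"
    by blast
  then show "\<exists>w. (r = umult (principal w) p \<and> q = umult p (principal (ginv w)))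
               \<or> (r = principal w \<and> q = umult p (principal (ginv w)))
               \<or> (r = umult (principal w) p \<and> q = principal (ginv w))"
  proof cases
    case right
    then show ?thesis
      using qr umult_principal_right_eq by blast
  next
    case left
    then show ?thesis
      using qr umult_principal_left_eq fg.inverse_inverse by metis
  next
    case nonprincipal
    then show ?thesis
      using qr nonprincipal_factorization[OF assms(1,3)] nonprincipal_iff by metis
  qed
qed

end
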